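(* Let $a\in(0,1)$ and let $(X_t)_{t=0,\dots,n}$ be a stationary Markov chain generated by the copula $C(u,v)=a\min(u,v)+(1-a)\max(u+v-1,0)$ and the uniform$(0,1)$ marginal distribution. Then: (i) the random variables $I(X_t=X_{t+1})$, $t=0,\dots,n-1$, are independent and identically distributed Bernoulli($a$) random variables; (ii) $Y_n=\frac1n\sum_{t=0}^{n-1}I(X_t=X_{t+1})$ is an unbiased and consistent estimator of $a$, and $Y_n$ satisfies the central limit theorem, i.e. $\sqrt n(Y_n-a)\to N(0,a(1-a))$ in distribution; (iii) the maximum likelihood estimator of $a$ (based on the likelihood $L(a)=\prod_{t=0}^{n-1}a^{Y_t}(1-a)^{1-Y_t}$, $Y_t=I(X_t=X_{t+1})$) is the method of moments estimator $Y_n$.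
   Context: A stationary Markov chain $(X_t)$ is generated by a copula $C$ and a marginal cdf $F$ if each $X_t$ has cdf $F$ and $P(X_t\le x,X_{t+1}\le y)=C(F(x),F(y))$ for all $x,y$. $I(\cdot)$ denotes the indicator of an event. *)

theory Defs
  imports "HOL-Probability.Probability"
begin

definition unif_cdf :: "real \<Rightarrow> real" where
  "unif_cdf x = max 0 (min 1 x)"

definition mix_copula :: "real \<Rightarrow> real \<Rightarrow> real \<Rightarrow> real" where
  "mix_copula a u v = a * min u v + (1 - a) * max (u + v - 1) 0"

definition past_algebra :: "'a measure \<Rightarrow> (nat \<Rightarrow> 'a \<Rightarrow> real) \<Rightarrow> nat \<Rightarrow> 'a measure" where
  "past_algebra M X t =
     vimage_algebra (space M) (\<lambda>\<omega>. \<lambda>i\<in>{..t}. X i \<omega>) (PiM {..t} (\<lambda>_. borel))"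

definition markov_chain :: "'a measure \<Rightarrow> (nat \<Rightarrow> 'a \<Rightarrow> real) \<Rightarrow> bool" where
  "markov_chain M X \<longleftrightarrow> prob_space M \<and> (\<forall>t. X t \<in> borel_measurable M) \<and>
     (\<forall>t. \<forall>B\<in>sets borel.
        AE \<omega> in M.
          real_cond_exp M (past_algebra M X t)
              (indicator {\<omega>\<in>space M. X (Suc t) \<omega> \<in> B}) \<omega>
        = real_cond_exp M (vimage_algebra (space M) (X t) borel)
              (indicator {\<omega>\<in>space M. X (Suc t) \<omega> \<in> B}) \<omega>)"

definition stationary :: "'a measure \<Rightarrow> (nat \<Rightarrow> 'a \<Rightarrow> real) \<Rightarrow> bool" where
  "stationary M X \<longleftrightarrow> (\<forall>k s.
     distr M (PiM {..k} (\<lambda>_. borel)) (\<lambda>\<omega>. \<lambda>i\<in>{..k}. X (s + i) \<omega>)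
   = distr M (PiM {..k} (\<lambda>_. borel)) (\<lambda>\<omega>. \<lambda>i\<in>{..k}. X i \<omega>))"

definition generated_by :: "'a measure \<Rightarrow> (nat \<Rightarrow> 'a \<Rightarrow> real)
    \<Rightarrow> (real \<Rightarrow> real \<Rightarrow> real) \<Rightarrow> (real \<Rightarrow> real) \<Rightarrow> bool" where
  "generated_by M X C F \<longleftrightarrow>
     (\<forall>t x. measure M {\<omega>\<in>space M. X t \<omega> \<le> x} = F x) \<and>
     (\<forall>t x y. measure M {\<omega>\<in>space M. X t \<omega> \<le> x \<and> X (Suc t) \<omega> \<le> y} = C (F x) (F y))"

definition eqind :: "(nat \<Rightarrow> 'a \<Rightarrow> real) \<Rightarrow> nat \<Rightarrow> 'a \<Rightarrow> real" where
  "eqind X t \<omega> = (if X t \<omega> = X (Suc t) \<omega> then 1 else 0)"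

definition Yn :: "(nat \<Rightarrow> 'a \<Rightarrow> real) \<Rightarrow> nat \<Rightarrow> 'a \<Rightarrow> real" where
  "Yn X n \<omega> = (\<Sum>t<n. eqind X t \<omega>) / real n"

definition likelihood :: "(nat \<Rightarrow> 'a \<Rightarrow> real) \<Rightarrow> nat \<Rightarrow> 'a \<Rightarrow> real \<Rightarrow> real" where
  "likelihood X n \<omega> b =
     (\<Prod>t<n. b ^ (if X t \<omega> = X (Suc t) \<omega> then 1 else 0)
               * (1 - b) ^ (1 - (if X t \<omega> = X (Suc t) \<omega> then 1 else 0)))"

end

theory Submission
  imports Defs
begin

(* Under the copula a min(u,v) + (1-a) max(u+v-1,0) with uniform marginals, X_{t+1} equals X_t
   with probability a and 1 - X_t with probability 1 - a: the copula lives on the diagonal and the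
   antidiagonal. Hence, up to a null set, X_t = X_{t+1} exactly when X_t and X_{t+1} lie on the same
   side of 1/2, and the conditional probability that X_{t+1} <= 1/2 given X_t is a or 1 - a
   according to the side of X_t. By the Markov property the same holds given X_0, ..., X_t, so
   P(A, X_t = X_{t+1}) = a P(A) for every event A determined by X_0, ..., X_t. Thus the indicators
   of X_t = X_{t+1} are independent Bernoulli(a) variables, and consistency and asymptotic
   normality of their mean Y_n are the weak law of large numbers and the central limit theorem.
   Finally, b^k (1-b)^(n-k) is uniquely maximized on [0,1] at b = k/n. *)

section \<open>Independent Bernoulli sequences and their sample means\<close>

lemma (in prob_space) indep_varsI_indep_events:
  assumes "indep_events (\<lambda>i. {\<omega>\<in>space M. P i \<omega>}) I"
  shows "indep_vars (\<lambda>_. count_space UNIV) P I"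
proof -
  have events: "{\<omega>\<in>space M. P i \<omega>} \<in> events" if "i \<in> I" for i
    using assms that by (auto simp: indep_events_def)
  have "indep_sets (\<lambda>i. sigma_sets (space M) {{\<omega>\<in>space M. P i \<omega>}}) I"
    using assms unfolding indep_events_def_alt by (rule indep_sets_sigma) (simp add: Int_stable_def)
  then have "indep_sets (\<lambda>i. {P i -` A \<inter> space M |A. A \<in> sets (count_space UNIV)}) I"
  proof (rule indep_sets_mono_sets)
    fix i assume "i \<in> I"
    let ?E = "{\<omega>\<in>space M. P i \<omega>}"
    have "{?E} \<subseteq> Pow (space M)" by auto
    then have "P i \<in> measurable (sigma (space M) {?E}) (count_space UNIV)"
      by (simp add: pred_def sigma_sets.Basic)
    from measurable_sets[OF this] \<open>{?E} \<subseteq> Pow (space M)\<close>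
    show "{P i -` A \<inter> space M |A. A \<in> sets (count_space UNIV)} \<subseteq> sigma_sets (space M) {?E}"
      by auto
  qed
  moreover have "random_variable (count_space UNIV) (P i)" if "i \<in> I" for i
    using events[OF that] by (simp add: pred_def)
  ultimately show ?thesis unfolding indep_vars_def2 by blast
qed

lemma (in prob_space) indep_eventsI_filtration:
  fixes E :: "nat \<Rightarrow> 'a set" and F :: "nat \<Rightarrow> 'a measure"
  assumes sub: "\<And>t. subalgebra M (F t)"
    and events: "\<And>t. E t \<in> events"
    and adapted: "\<And>s t. s < t \<Longrightarrow> E s \<in> sets (F t)"
    and indep_past: "\<And>t A. A \<in> sets (F t) \<Longrightarrow> prob (A \<inter> E t) = prob A * prob (E t)"
  shows "indep_events E UNIV"
proof (rule indep_eventsI)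
  have "prob (space M \<inter> \<Inter>(E ` J)) = (\<Prod>j\<in>J. prob (E j))" if "finite J" "J \<subseteq> {..<n}" for J n
    using that
  proof (induction n arbitrary: J)
    case 0
    then show ?case by (simp add: prob_space)
  next
    case (Suc n)
    show ?case
    proof (cases "n \<in> J")
      case False
      then have "J \<subseteq> {..<n}" using Suc.prems by (auto simp: less_Suc_eq)
      then show ?thesis using Suc by blast
    next
      case True
      define J' where "J' = J - {n}"
      have J': "finite J'" "J' \<subseteq> {..<n}" "J = insert n J'" "n \<notin> J'"
        using Suc.prems True by (auto simp: J'_def less_Suc_eq)
      have space: "space (F n) = space M" using sub[of n] by (simp add: subalgebra_def)
      have "space (F n) \<inter> \<Inter>(E ` J') \<in> sets (F n)"
      proof (cases "J' = {}")
        case False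
        with J' adapted show ?thesis by (intro sets.Int sets.top sets.finite_INT) auto
      qed simp
      then have "prob (space M \<inter> \<Inter>(E ` J') \<inter> E n) = prob (space M \<inter> \<Inter>(E ` J')) * prob (E n)"
        unfolding space by (rule indep_past)
      moreover have "space M \<inter> \<Inter>(E ` J) = space M \<inter> \<Inter>(E ` J') \<inter> E n"
        using J' by auto
      ultimately show ?thesis using Suc.IH[OF J'(1,2)] J' by (simp add: mult.commute)
    qed
  qed
  moreover have "space M \<inter> \<Inter>(E ` J) = \<Inter>(E ` J)" if "J \<noteq> {}" for J
    using that events sets.sets_into_space by blast
  ultimately show "prob (\<Inter>(E ` J)) = (\<Prod>j\<in>J. prob (E j))" if "finite J" "J \<noteq> {}" for J
    using that lessThan_Suc_atMost[of "Max J"] by (metis Max_ge atMost_iff subsetI)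
qed (rule events)

lemma (in prob_space) distr_pred_eq_bernoulli_pmf:
  assumes event: "{\<omega>\<in>space M. P \<omega>} \<in> events" and prob: "prob {\<omega>\<in>space M. P \<omega>} = p"
  shows "distr M (count_space UNIV) P = measure_pmf (bernoulli_pmf p)"
proof (rule measure_eqI_countable[where A=UNIV])
  have P: "P \<in> measurable M (count_space UNIV)"
    using event by (simp add: pred_def)
  have p: "0 \<le> p" "p \<le> 1" using prob by auto
  fix b :: bool
  have "P -` {b} \<inter> space M = (if b then {\<omega>\<in>space M. P \<omega>} else space M - {\<omega>\<in>space M. P \<omega>})"
    by auto
  then have "emeasure (distr M (count_space UNIV) P) {b} = ennreal (if b then p else 1 - p)"
    using event prob by (simp add: emeasure_distr[OF P] emeasure_eq_measure prob_compl)
  also have "\<dots> = emeasure (measure_pmf (bernoulli_pmf p)) {b}"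
    using p by (simp add: emeasure_pmf_single)
  finally show "emeasure (distr M (count_space UNIV) P) {b} = emeasure (measure_pmf (bernoulli_pmf p)) {b}" .
qed auto

lemma (in prob_space)
  fixes W :: "nat \<Rightarrow> 'a \<Rightarrow> real"
  assumes indep: "indep_vars (\<lambda>_. borel) W UNIV"
    and square_integrable: "\<And>i. integrable M (\<lambda>\<omega>. (W i \<omega>)\<^sup>2)"
    and mean_zero: "\<And>i. expectation (W i) = 0"
    and second_moment: "\<And>i. expectation (\<lambda>\<omega>. (W i \<omega>)\<^sup>2) = v"
  shows integrable_square_sum_indep: "integrable M (\<lambda>\<omega>. (\<Sum>i<n. W i \<omega>)\<^sup>2)"
    and integral_square_sum_indep: "(\<integral>\<omega>. (\<Sum>i<n. W i \<omega>)\<^sup>2 \<partial>M) = real n * v"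
proof -
  have W_measurable[measurable]: "W i \<in> borel_measurable M" for i
    using indep by (simp add: indep_vars_def2)
  have W_integrable: "integrable M (W i)" for i
    using square_integrable_imp_integrable[OF _ square_integrable] by simp
  have product: "integrable M (\<lambda>\<omega>. W i \<omega> * W j \<omega>) \<and>
      (\<integral>\<omega>. W i \<omega> * W j \<omega> \<partial>M) = (if i = j then v else 0)" for i j
  proof (cases "i = j")
    case True
    then show ?thesis using square_integrable second_moment by (simp add: power2_eq_square)
  next
    case False
    have indep_ij: "indep_vars (\<lambda>_. borel) W {i, j}"
      by (rule indep_vars_subset[OF indep]) simp
    show ?thesis
      using indep_vars_lebesgue_integral[OF _ indep_ij] indep_vars_integrable[OF _ indep_ij]
        W_integrable mean_zero False
      by simp
  qed
  have expand: "(\<lambda>\<omega>. (\<Sum>i<n. W i \<omega>)\<^sup>2) = (\<lambda>\<omega>. \<Sum>i<n. \<Sum>j<n. W i \<omega> * W j \<omega>)"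
    by (simp add: power2_eq_square sum_product)
  show "integrable M (\<lambda>\<omega>. (\<Sum>i<n. W i \<omega>)\<^sup>2)"
    unfolding expand using product by simp
  have "(\<integral>\<omega>. (\<Sum>i<n. W i \<omega>)\<^sup>2 \<partial>M) = (\<Sum>i<n. \<Sum>j<n. \<integral>\<omega>. W i \<omega> * W j \<omega> \<partial>M)"
    unfolding expand using product by (simp add: Bochner_Integration.integral_sum)
  also have "\<dots> = (\<Sum>i<n. \<Sum>j<n. if i = j then v else 0)"
    by (intro sum.cong refl) (simp add: product)
  also have "\<dots> = real n * v"
    by simp
  finally show "(\<integral>\<omega>. (\<Sum>i<n. W i \<omega>)\<^sup>2 \<partial>M) = real n * v" .
qed

lemma (in prob_space) weak_law_of_large_numbers:
  fixes Z :: "nat \<Rightarrow> 'a \<Rightarrow> real"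
  assumes indep: "indep_vars (\<lambda>_. borel) Z UNIV"
    and square_integrable: "\<And>i. integrable M (\<lambda>\<omega>. (Z i \<omega>)\<^sup>2)"
    and mean: "\<And>i. expectation (Z i) = m"
    and var: "\<And>i. variance (Z i) = v"
    and \<epsilon>: "0 < \<epsilon>"
  shows "(\<lambda>n. prob {\<omega>\<in>space M. \<epsilon> < \<bar>(\<Sum>i<n. Z i \<omega>) / real n - m\<bar>}) \<longlonglongrightarrow> 0"
proof -
  define W where "W = (\<lambda>i \<omega>. Z i \<omega> - m)"
  have Z_measurable[measurable]: "Z i \<in> borel_measurable M" for i
    using indep by (simp add: indep_vars_def2)
  have Z_integrable: "integrable M (Z i)" for i
    using square_integrable_imp_integrable[OF _ square_integrable] by simp
  have W_indep: "indep_vars (\<lambda>_. borel) W UNIV"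
    unfolding W_def using indep_vars_compose2[OF indep, of "\<lambda>_ x. x - m" "\<lambda>_. borel"] by simp
  have "(W i \<omega>)\<^sup>2 = (Z i \<omega>)\<^sup>2 - 2 * m * Z i \<omega> + m\<^sup>2" for i \<omega>
    by (simp add: W_def power2_diff)
  then have W_square: "integrable M (\<lambda>\<omega>. (W i \<omega>)\<^sup>2)" for i
    using Z_integrable square_integrable by simp
  have W_integrable: "integrable M (W i)" for i
    using Z_integrable by (simp add: W_def)
  have W_mean: "expectation (W i) = 0" for i
    using Z_integrable mean by (simp add: W_def prob_space)
  have W_second_moment: "expectation (\<lambda>\<omega>. (W i \<omega>)\<^sup>2) = v" for i
    using var[of i] by (simp add: W_def mean)
  note W_sum = integrable_square_sum_indep[OF W_indep W_square W_mean W_second_moment]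
    integral_square_sum_indep[OF W_indep W_square W_mean W_second_moment]
  have Chebyshev: "prob {\<omega>\<in>space M. \<epsilon> < \<bar>(\<Sum>i<n. Z i \<omega>) / real n - m\<bar>} \<le> v / real n / \<epsilon>\<^sup>2"
    if n: "1 \<le> n" for n
  proof -
    define f where "f = (\<lambda>\<omega>. (\<Sum>i<n. W i \<omega>) / real n)"
    have f_measurable[measurable]: "f \<in> borel_measurable M"
      unfolding f_def W_def by measurable
    have f_eq: "(\<Sum>i<n. Z i \<omega>) / real n - m = f \<omega>" for \<omega>
    proof -
      have "f \<omega> = ((\<Sum>i<n. Z i \<omega>) - real n * m) / real n"
        by (simp add: f_def W_def sum_subtractf)
      also have "\<dots> = (\<Sum>i<n. Z i \<omega>) / real n - m"
        using n by (simp add: diff_divide_distrib)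
      finally show ?thesis by simp
    qed
    have "(\<lambda>\<omega>. (f \<omega>)\<^sup>2) = (\<lambda>\<omega>. (\<Sum>i<n. W i \<omega>)\<^sup>2 / (real n)\<^sup>2)"
      by (simp add: f_def power_divide)
    then have f_square: "integrable M (\<lambda>\<omega>. (f \<omega>)\<^sup>2)"
      using W_sum by simp
    have f_mean: "expectation f = 0"
      unfolding f_def using W_integrable W_mean by simp
    have "{\<omega>\<in>space M. \<epsilon> < \<bar>f \<omega>\<bar>} \<subseteq> {\<omega>\<in>space M. \<epsilon> \<le> \<bar>f \<omega> - expectation f\<bar>}"
      using f_mean by auto
    then have "prob {\<omega>\<in>space M. \<epsilon> < \<bar>f \<omega>\<bar>} \<le> prob {\<omega>\<in>space M. \<epsilon> \<le> \<bar>f \<omega> - expectation f\<bar>}"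
      by (rule finite_measure_mono) measurable
    also have "\<dots> \<le> variance f / \<epsilon>\<^sup>2"
      by (rule Chebyshev_inequality[OF f_measurable f_square \<epsilon>])
    also have "variance f = (\<integral>\<omega>. (\<Sum>i<n. W i \<omega>)\<^sup>2 \<partial>M) / (real n)\<^sup>2"
      unfolding f_mean by (simp add: f_def power_divide)
    also have "\<dots> = v / real n"
      unfolding W_sum(2) using n by (simp add: power2_eq_square)
    finally show ?thesis unfolding f_eq .
  qed
  show ?thesis
  proof (rule tendsto_sandwich[of "\<lambda>_. 0" _ _ "\<lambda>n. v / real n / \<epsilon>\<^sup>2"])
    show "\<forall>\<^sub>F n in sequentially. prob {\<omega>\<in>space M. \<epsilon> < \<bar>(\<Sum>i<n. Z i \<omega>) / real n - m\<bar>} \<le> v / real n / \<epsilon>\<^sup>2"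
      by (rule eventually_mono[OF eventually_ge_at_top[of 1] Chebyshev])
    show "(\<lambda>n. v / real n / \<epsilon>\<^sup>2) \<longlonglongrightarrow> 0"
      by (rule tendsto_divide_zero[OF lim_const_over_n])
  qed simp_all
qed

lemma cdf_distr_scale:
  fixes f :: "'a \<Rightarrow> real"
  assumes [measurable]: "f \<in> borel_measurable M" and c: "0 < c"
  shows "cdf (distr M borel (\<lambda>\<omega>. c * f \<omega>)) x = cdf (distr M borel f) (x / c)"
proof -
  have "(\<lambda>\<omega>. c * f \<omega>) -` {..x} \<inter> space M = f -` {..x / c} \<inter> space M"
    using c by (auto simp: pos_le_divide_eq mult.commute)
  then show ?thesis by (simp add: cdf_def measure_distr)
qed

lemma weak_conv_m_scale:
  assumes conv: "weak_conv_m (\<lambda>n. distr (M n) borel (f n)) \<mu>"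
    and f: "\<And>n. f n \<in> borel_measurable (M n)"
    and sets_\<mu>: "sets \<mu> = sets borel" and c: "0 < c"
  shows "weak_conv_m (\<lambda>n. distr (M n) borel (\<lambda>\<omega>. c * f n \<omega>)) (distr \<mu> borel (\<lambda>y. c * y))"
  unfolding weak_conv_m_def weak_conv_def
proof (intro allI impI)
  fix x
  assume cont: "isCont (cdf (distr \<mu> borel (\<lambda>y. c * y))) x"
  have cdf_\<mu>: "cdf (distr \<mu> borel (\<lambda>y. c * y)) y = cdf \<mu> (y / c)" for y
    using cdf_distr_scale[OF measurable_ident_sets[OF sets_\<mu>] c] distr_id2[OF sets_\<mu>[symmetric]]
    by simp
  have "isCont (\<lambda>y. c * y) (x / c)"
    by (intro continuous_intros)
  moreover have "isCont (cdf (distr \<mu> borel (\<lambda>y. c * y))) (c * (x / c))"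
    using cont c by simp
  ultimately have "isCont (\<lambda>y. cdf (distr \<mu> borel (\<lambda>y. c * y)) (c * y)) (x / c)"
    by (rule isCont_o2)
  moreover have "(\<lambda>y. cdf (distr \<mu> borel (\<lambda>y. c * y)) (c * y)) = cdf \<mu>"
    using c by (simp add: cdf_\<mu> fun_eq_iff)
  ultimately have "isCont (cdf \<mu>) (x / c)"
    by simp
  then have "(\<lambda>n. cdf (distr (M n) borel (f n)) (x / c)) \<longlonglongrightarrow> cdf \<mu> (x / c)"
    using conv unfolding weak_conv_m_def weak_conv_def by blast
  then show "(\<lambda>n. cdf (distr (M n) borel (\<lambda>\<omega>. c * f n \<omega>)) x) \<longlonglongrightarrow> cdf (distr \<mu> borel (\<lambda>y. c * y)) x"
    unfolding cdf_\<mu> cdf_distr_scale[OF f c] .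
qed

lemma distr_std_normal_scale:
  assumes "0 < \<sigma>"
  shows "distr std_normal_distribution borel (\<lambda>x. \<sigma> * x) = density lborel (normal_density 0 \<sigma>)"
proof -
  interpret std_normal: prob_space std_normal_distribution
    using real_dist_normal_dist by (simp add: real_distribution_def)
  have "distributed std_normal_distribution lborel (\<lambda>x. x) (normal_density 0 1)"
    by (simp add: distributed_def distr_id2)
  from std_normal.normal_density_affine[OF this, of \<sigma> 0] assms
  have "distr std_normal_distribution lborel (\<lambda>x. \<sigma> * x) = density lborel (normal_density 0 \<sigma>)"
    by (simp add: distributed_def)
  then show ?thesis by (metis distr_cong sets_lborel)
qed

locale bernoulli_sequence = prob_space +
  fixes P :: "nat \<Rightarrow> 'a \<Rightarrow> bool" and p :: real
  assumes indep: "indep_vars (\<lambda>_. count_space UNIV) P UNIV"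
    and distr_P: "\<And>i. distr M (count_space UNIV) (P i) = measure_pmf (bernoulli_pmf p)"
    and p: "0 < p" "p < 1"
begin

lemma measurable_P[measurable]: "P i \<in> measurable M (count_space UNIV)"
  using indep by (simp add: indep_vars_def2)

lemma prob_P: "prob {\<omega>\<in>space M. P i \<omega>} = p"
proof -
  have "prob {\<omega>\<in>space M. P i \<omega>} = measure (distr M (count_space UNIV) (P i)) {True}"
    by (subst measure_distr) (auto intro: arg_cong[where f=prob])
  also have "\<dots> = p"
    using p by (simp add: distr_P measure_pmf_single)
  finally show ?thesis .
qed

lemma indep_indicators: "indep_vars (\<lambda>_. borel) (\<lambda>i \<omega>. of_bool (P i \<omega>) :: real) UNIV"
  using indep_vars_compose2[OF indep, of "\<lambda>_ b. of_bool b" "\<lambda>_. borel"] by simp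

lemma expectation_indicator: "expectation (\<lambda>\<omega>. of_bool (P i \<omega>) :: real) = p"
proof -
  have "expectation (\<lambda>\<omega>. of_bool (P i \<omega>) :: real) = expectation (indicator {\<omega>\<in>space M. P i \<omega>})"
    by (intro Bochner_Integration.integral_cong) (auto simp: indicator_def)
  then show ?thesis by (simp add: prob_P Int_absorb2)
qed

lemma integrable_indicator: "integrable M (\<lambda>\<omega>. of_bool (P i \<omega>) :: real)"
  by (rule integrable_const_bound[where B=1]) auto

lemma integrable_indicator_square: "integrable M (\<lambda>\<omega>. (of_bool (P i \<omega>) :: real)\<^sup>2)"
  by (rule integrable_const_bound[where B=1]) auto

lemma variance_indicator: "variance (\<lambda>\<omega>. of_bool (P i \<omega>) :: real) = p * (1 - p)"
proof -
  have "(of_bool (P i \<omega>) - p)\<^sup>2 = (1 - 2 * p) * of_bool (P i \<omega>) + p\<^sup>2" for \<omega>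
    by (cases "P i \<omega>") (simp_all add: power2_eq_square algebra_simps)
  then have "variance (\<lambda>\<omega>. of_bool (P i \<omega>) :: real)
      = expectation (\<lambda>\<omega>. (1 - 2 * p) * of_bool (P i \<omega>) + p\<^sup>2)"
    by (simp add: expectation_indicator)
  also have "\<dots> = (1 - 2 * p) * p + p\<^sup>2"
    using integrable_indicator[of i] expectation_indicator[of i] by (simp add: prob_space)
  finally show ?thesis by (simp add: power2_eq_square algebra_simps)
qed

lemma distr_indicator:
  "distr M borel (\<lambda>\<omega>. of_bool (P i \<omega>) :: real) = distr (measure_pmf (bernoulli_pmf p)) borel of_bool"
proof -
  have "distr M borel (of_bool \<circ> P i) = distr (distr M (count_space UNIV) (P i)) borel of_bool"
    by (rule distr_distr[symmetric]) simp_all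
  then show ?thesis by (simp only: distr_P comp_def)
qed

lemma sample_mean_expectation:
  assumes "1 \<le> n"
  shows "expectation (\<lambda>\<omega>. (\<Sum>i<n. of_bool (P i \<omega>)) / real n) = p"
  using assms expectation_indicator
  by (simp add: Bochner_Integration.integral_sum integrable_indicator del: sum_of_bool_eq)

lemma sample_mean_tendsto_in_prob:
  assumes "0 < \<epsilon>"
  shows "(\<lambda>n. prob {\<omega>\<in>space M. \<epsilon> < \<bar>(\<Sum>i<n. of_bool (P i \<omega>)) / real n - p\<bar>}) \<longlonglongrightarrow> 0"
  by (rule weak_law_of_large_numbers[OF indep_indicators integrable_indicator_square
        expectation_indicator variance_indicator assms])

lemma sample_mean_clt:
  "weak_conv_m (\<lambda>n. distr M borel (\<lambda>\<omega>. sqrt (real n) * ((\<Sum>i<n. of_bool (P i \<omega>)) / real n - p)))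
     (density lborel (normal_density 0 (sqrt (p * (1 - p)))))"
proof -
  define \<sigma> where "\<sigma> = sqrt (p * (1 - p))"
  have \<sigma>: "0 < \<sigma>" "\<sigma>\<^sup>2 = p * (1 - p)" using p by (simp_all add: \<sigma>_def)
  have standardized: "weak_conv_m
      (\<lambda>n. distr M borel (\<lambda>\<omega>. (\<Sum>i<n. of_bool (P i \<omega>) - p) / sqrt (real n * \<sigma>\<^sup>2)))
      std_normal_distribution"
    by (rule central_limit_theorem[OF indep_indicators expectation_indicator \<sigma>(1) _ _ distr_indicator])
       (simp_all add: \<sigma>(2) variance_indicator integrable_indicator_square)
  have rescale: "\<sigma> * ((\<Sum>i<n. of_bool (P i \<omega>) - p) / sqrt (real n * \<sigma>\<^sup>2))
      = sqrt (real n) * ((\<Sum>i<n. of_bool (P i \<omega>)) / real n - p)" for n \<omega>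
  proof (cases "n = 0")
    case False
    have "sqrt (real n * \<sigma>\<^sup>2) = sqrt (real n) * \<sigma>" using \<sigma>(1) by (simp add: real_sqrt_mult)
    with False \<sigma>(1) show ?thesis
      by (simp add: sum_subtractf field_simps)
  qed simp
  have "weak_conv_m
      (\<lambda>n. distr M borel (\<lambda>\<omega>. \<sigma> * ((\<Sum>i<n. of_bool (P i \<omega>) - p) / sqrt (real n * \<sigma>\<^sup>2))))
      (distr std_normal_distribution borel (\<lambda>y. \<sigma> * y))"
    by (rule weak_conv_m_scale[OF standardized _ _ \<sigma>(1)]) simp_all
  then have "weak_conv_m (\<lambda>n. distr M borel (\<lambda>\<omega>. sqrt (real n) * ((\<Sum>i<n. of_bool (P i \<omega>)) / real n - p)))
      (density lborel (normal_density 0 \<sigma>))"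
    unfolding rescale distr_std_normal_scale[OF \<sigma>(1)] .
  then show ?thesis by (simp only: \<sigma>_def)
qed

end

section \<open>Conditional probabilities given the past of a Markov chain\<close>

lemma emeasure_distr_density_vimage:
  fixes f g :: "'a \<Rightarrow> real"
  assumes f[measurable]: "f \<in> borel_measurable M"
    and g: "integrable M g" "\<And>\<omega>. 0 \<le> g \<omega>" and D[measurable]: "D \<in> sets borel"
  shows "emeasure (distr (density M (\<lambda>\<omega>. ennreal (g \<omega>))) borel f) D
     = ennreal (\<integral>\<omega>\<in>f -` D \<inter> space M. g \<omega> \<partial>M)"
proof -
  have [measurable]: "g \<in> borel_measurable M" by (rule borel_measurable_integrable[OF g(1)])
  have "emeasure (distr (density M (\<lambda>\<omega>. ennreal (g \<omega>))) borel f) D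
      = emeasure (density M (\<lambda>\<omega>. ennreal (g \<omega>))) (f -` D \<inter> space M)"
    by (simp add: emeasure_distr)
  also have "\<dots> = (\<integral>\<^sup>+\<omega>. ennreal (indicator (f -` D \<inter> space M) \<omega> * g \<omega>) \<partial>M)"
    by (simp add: emeasure_density) (auto intro!: nn_integral_cong split: split_indicator)
  also have "\<dots> = ennreal (\<integral>\<omega>\<in>f -` D \<inter> space M. g \<omega> \<partial>M)"
    using g(2) integrable_mult_indicator[OF measurable_sets[OF f D] g(1)]
    unfolding set_lebesgue_integral_def real_scaleR_def by (intro nn_integral_eq_integral) auto
  finally show ?thesis .
qed

lemma set_integral_vimage_eq_if_cdf_eq:
  fixes f g1 g2 :: "'a \<Rightarrow> real"
  assumes f[measurable]: "f \<in> borel_measurable M"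
    and g1: "integrable M g1" "\<And>\<omega>. 0 \<le> g1 \<omega>" and g2: "integrable M g2" "\<And>\<omega>. 0 \<le> g2 \<omega>"
    and cdf: "\<And>x. (\<integral>\<omega>\<in>f -` {..x} \<inter> space M. g1 \<omega> \<partial>M) = (\<integral>\<omega>\<in>f -` {..x} \<inter> space M. g2 \<omega> \<partial>M)"
    and D: "D \<in> sets borel"
  shows "(\<integral>\<omega>\<in>f -` D \<inter> space M. g1 \<omega> \<partial>M) = (\<integral>\<omega>\<in>f -` D \<inter> space M. g2 \<omega> \<partial>M)"
proof -
  \<comment> \<open>Both sides are masses of D under the images by f of the measures with densities g1, g2;
    these image measures are finite and have the same cdf.\<close>
  define \<mu> where "\<mu> g = distr (density M (\<lambda>\<omega>. ennreal (g \<omega>))) borel f" for g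
  have \<mu>_eq: "emeasure (\<mu> g) A = ennreal (\<integral>\<omega>\<in>f -` A \<inter> space M. g \<omega> \<partial>M)"
    if "integrable M g" "\<And>\<omega>. 0 \<le> g \<omega>" "A \<in> sets borel" for g :: "'a \<Rightarrow> real" and A
    unfolding \<mu>_def using that by (rule emeasure_distr_density_vimage[OF f])
  have nonneg: "0 \<le> (\<integral>\<omega>\<in>A. g \<omega> \<partial>M)" if "\<And>\<omega>. 0 \<le> g \<omega>" for g :: "'a \<Rightarrow> real" and A
    unfolding set_lebesgue_integral_def by (rule integral_nonneg_AE) (simp add: that)
  have finite_borel: "finite_borel_measure (\<mu> g)"
    if "integrable M g" "\<And>\<omega>. 0 \<le> g \<omega>" for g :: "'a \<Rightarrow> real"
  proof -
    have "space (\<mu> g) = UNIV" "sets (\<mu> g) = sets borel" by (simp_all add: \<mu>_def)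
    moreover from this have "finite_measure (\<mu> g)"
      using \<mu>_eq[OF that, of UNIV] by (intro finite_measureI) simp
    ultimately show ?thesis by (simp add: finite_borel_measure_def finite_borel_measure_axioms_def)
  qed
  have "cdf (\<mu> g1) = cdf (\<mu> g2)"
    using cdf \<mu>_eq[OF g1] \<mu>_eq[OF g2] nonneg g1(2) g2(2) by (auto simp: cdf_def measure_def)
  then have "\<mu> g1 = \<mu> g2"
    using finite_borel[OF g1] finite_borel[OF g2] by (intro cdf_unique')
  then show ?thesis
    using \<mu>_eq[OF g1 D] \<mu>_eq[OF g2 D] nonneg g1(2) g2(2) by simp
qed

lemma (in finite_measure) real_cond_exp_vimage_eq:
  fixes Y Z :: "'a \<Rightarrow> real" and h :: "real \<Rightarrow> real"
  assumes Y[measurable]: "Y \<in> borel_measurable M" and h[measurable]: "h \<in> borel_measurable borel"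
    and Z: "integrable M Z" "\<And>\<omega>. 0 \<le> Z \<omega>"
    and hY: "integrable M (\<lambda>\<omega>. h (Y \<omega>))" "\<And>y. 0 \<le> h y"
    and cdf: "\<And>x. (\<integral>\<omega>\<in>Y -` {..x} \<inter> space M. Z \<omega> \<partial>M) = (\<integral>\<omega>\<in>Y -` {..x} \<inter> space M. h (Y \<omega>) \<partial>M)"
  shows "AE \<omega> in M. real_cond_exp M (vimage_algebra (space M) Y borel) Z \<omega> = h (Y \<omega>)"
proof -
  interpret finite_measure_subalgebra M "vimage_algebra (space M) Y borel"
    by unfold_locales (simp add: subalgebra_def sets_image_in_sets)
  have Y_vimage: "Y \<in> borel_measurable (vimage_algebra (space M) Y borel)"
    by (rule measurable_vimage_algebra1) simp
  show ?thesis
  proof (rule real_cond_exp_charact)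
    fix A assume "A \<in> sets (vimage_algebra (space M) Y borel)"
    then obtain D where "D \<in> sets borel" "A = Y -` D \<inter> space M"
      by (auto simp: sets_vimage_algebra2)
    then show "(\<integral>\<omega>\<in>A. Z \<omega> \<partial>M) = (\<integral>\<omega>\<in>A. h (Y \<omega>) \<partial>M)"
      using set_integral_vimage_eq_if_cdf_eq[OF Y Z hY cdf] by simp
  next
    show "(\<lambda>\<omega>. h (Y \<omega>)) \<in> borel_measurable (vimage_algebra (space M) Y borel)"
      using measurable_compose[OF Y_vimage h] by (simp add: comp_def)
  qed (fact Z hY)+
qed

lemma (in finite_measure) set_integral_indicator:
  assumes "A \<in> sets M" "B \<in> sets M"
  shows "(\<integral>\<omega>\<in>A. indicator B \<omega> \<partial>M) = measure M (A \<inter> B)"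
  using assms by (simp add: set_lebesgue_integral_def indicator_inter_arith[symmetric] Int_absorb2)

lemma space_past_algebra[simp]: "space (past_algebra M X t) = space M"
  by (simp add: past_algebra_def)

lemma measurable_past_algebra:
  assumes "j \<le> t"
  shows "X j \<in> borel_measurable (past_algebra M X t)"
proof -
  have "(\<lambda>\<omega>. \<lambda>i\<in>{..t}. X i \<omega>) \<in> measurable (past_algebra M X t) (PiM {..t} (\<lambda>_. borel))"
    unfolding past_algebra_def by (rule measurable_vimage_algebra1) (auto simp: space_PiM)
  from measurable_compose[OF this measurable_component_singleton[of j "{..t}" "\<lambda>_. borel"]] assms
  show ?thesis by (simp add: comp_def)
qed

lemma subalgebra_past_algebra:
  assumes "\<And>t. X t \<in> borel_measurable M"
  shows "subalgebra M (past_algebra M X t)"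
proof -
  have "(\<lambda>\<omega>. \<lambda>i\<in>{..t}. X i \<omega>) \<in> measurable M (PiM {..t} (\<lambda>_. borel))"
    using assms by measurable
  then show ?thesis unfolding subalgebra_def past_algebra_def by (simp add: sets_image_in_sets)
qed

lemma markov_chain_prob_inter_past:
  assumes mc: "markov_chain M X" and B: "B \<in> sets borel" and h[measurable]: "h \<in> borel_measurable borel"
    and cond: "AE \<omega> in M. real_cond_exp M (vimage_algebra (space M) (X t) borel)
                 (indicator {\<omega>\<in>space M. X (Suc t) \<omega> \<in> B}) \<omega> = h (X t \<omega>)"
    and A: "A \<in> sets (past_algebra M X t)"
  shows "measure M (A \<inter> {\<omega>\<in>space M. X (Suc t) \<omega> \<in> B}) = (\<integral>\<omega>\<in>A. h (X t \<omega>) \<partial>M)"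
proof -
  interpret prob_space M using mc by (simp add: markov_chain_def)
  have X[measurable]: "X i \<in> borel_measurable M" for i
    using mc by (simp add: markov_chain_def)
  interpret past: finite_measure_subalgebra M "past_algebra M X t"
    by unfold_locales (rule subalgebra_past_algebra[OF X])
  let ?L = "{\<omega>\<in>space M. X (Suc t) \<omega> \<in> B}"
  have L[measurable]: "?L \<in> sets M" using B by measurable
  have A_M: "A \<in> sets M" using A past.subalg by (auto simp: subalgebra_def)
  have L_integrable: "integrable M (indicator ?L :: 'a \<Rightarrow> real)"
    using L by (simp add: emeasure_eq_measure)
  have "measure M (A \<inter> ?L) = (\<integral>\<omega>\<in>A. indicator ?L \<omega> \<partial>M)"
    using A_M L by (simp add: set_integral_indicator)
  also have "\<dots> = (\<integral>\<omega>\<in>A. real_cond_exp M (past_algebra M X t) (indicator ?L) \<omega> \<partial>M)"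
    by (rule past.real_cond_exp_intA[OF L_integrable A])
  also have "\<dots> = (\<integral>\<omega>\<in>A. h (X t \<omega>) \<partial>M)"
  proof (rule set_lebesgue_integral_cong_AE[OF A_M])
    have "AE \<omega> in M. real_cond_exp M (past_algebra M X t) (indicator ?L) \<omega>
        = real_cond_exp M (vimage_algebra (space M) (X t) borel) (indicator ?L) \<omega>"
      using mc B by (simp add: markov_chain_def)
    with cond show "AE \<omega>\<in>A in M. real_cond_exp M (past_algebra M X t) (indicator ?L) \<omega> = h (X t \<omega>)"
      by eventually_elim simp
    show "real_cond_exp M (past_algebra M X t) (indicator ?L) \<in> borel_measurable M"
      by (rule borel_measurable_cond_exp2)
  qed simp
  finally show ?thesis .
qed

section \<open>The chain generated by the mixture copula\<close>

lemma mix_copula_commute: "mix_copula a u v = mix_copula a v u"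
  by (simp add: mix_copula_def min.commute add.commute)

lemma (in prob_space) mix_copula_no_mass_between:
  fixes U V :: "'a \<Rightarrow> real"
  assumes [measurable]: "U \<in> borel_measurable M" "V \<in> borel_measurable M"
    and U: "\<And>x. prob {\<omega>\<in>space M. U \<omega> \<le> x} = unif_cdf x"
    and UV: "\<And>x y. prob {\<omega>\<in>space M. U \<omega> \<le> x \<and> V \<omega> \<le> y} = mix_copula a (unif_cdf x) (unif_cdf y)"
  shows "prob {\<omega>\<in>space M. U \<omega> \<le> q \<and> q < V \<omega> \<and> (U \<omega> \<le> 1/2 \<longleftrightarrow> V \<omega> \<le> 1/2)} = 0"
proof (cases "q < 1/2")
  \<comment> \<open>The copula is supported on the lines u = v and u + v = 1, which both miss this set.\<close>
  case True
  have "{\<omega>\<in>space M. U \<omega> \<le> q \<and> q < V \<omega> \<and> (U \<omega> \<le> 1/2 \<longleftrightarrow> V \<omega> \<le> 1/2)}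
      = {\<omega>\<in>space M. U \<omega> \<le> q \<and> V \<omega> \<le> 1/2} - {\<omega>\<in>space M. U \<omega> \<le> q \<and> V \<omega> \<le> q}"
    using True by auto
  also have "prob \<dots> = mix_copula a (unif_cdf q) (unif_cdf (1/2)) - mix_copula a (unif_cdf q) (unif_cdf q)"
    using True UV[of q "1/2"] UV[of q q] by (subst finite_measure_Diff) auto
  also have "\<dots> = 0"
    using True by (auto simp: mix_copula_def unif_cdf_def min_def max_def)
  finally show ?thesis .
next
  case False
  have upper: "prob {\<omega>\<in>space M. U \<omega> \<le> x \<and> y < V \<omega>} = unif_cdf x - mix_copula a (unif_cdf x) (unif_cdf y)"
    for x y
  proof -
    have "{\<omega>\<in>space M. U \<omega> \<le> x \<and> y < V \<omega>}
        = {\<omega>\<in>space M. U \<omega> \<le> x} - {\<omega>\<in>space M. U \<omega> \<le> x \<and> V \<omega> \<le> y}"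
      by auto
    then show ?thesis by (simp add: finite_measure_Diff U UV subset_eq)
  qed
  have "{\<omega>\<in>space M. U \<omega> \<le> q \<and> q < V \<omega> \<and> (U \<omega> \<le> 1/2 \<longleftrightarrow> V \<omega> \<le> 1/2)}
      = {\<omega>\<in>space M. U \<omega> \<le> q \<and> q < V \<omega>} - {\<omega>\<in>space M. U \<omega> \<le> 1/2 \<and> q < V \<omega>}"
    using False by auto
  also have "prob \<dots> = prob {\<omega>\<in>space M. U \<omega> \<le> q \<and> q < V \<omega>} - prob {\<omega>\<in>space M. U \<omega> \<le> 1/2 \<and> q < V \<omega>}"
    using False by (subst finite_measure_Diff) auto
  also have "\<dots> = 0"
  proof -
    define u where "u = unif_cdf q"
    have u: "1/2 \<le> u" "u \<le> 1" using False by (auto simp: u_def unif_cdf_def)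
    have half: "unif_cdf (1/2) = 1/2" by (simp add: unif_cdf_def)
    have C_uu: "mix_copula a u u = a * u + (1 - a) * (u + u - 1)"
      using u by (simp add: mix_copula_def max_absorb1)
    have C_hu: "mix_copula a (1/2) u = a / 2 + (1 - a) * (u - 1/2)"
      using u by (simp add: mix_copula_def max_absorb1 min_absorb1)
    show ?thesis
      unfolding upper u_def[symmetric] half C_uu C_hu by (simp add: field_simps)
  qed
  finally show ?thesis .
qed

lemma (in prob_space) mix_copula_AE_eq_iff_same_side:
  fixes U V :: "'a \<Rightarrow> real"
  assumes [measurable]: "U \<in> borel_measurable M" "V \<in> borel_measurable M"
    and U: "\<And>x. prob {\<omega>\<in>space M. U \<omega> \<le> x} = unif_cdf x"
    and V: "\<And>x. prob {\<omega>\<in>space M. V \<omega> \<le> x} = unif_cdf x"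
    and UV: "\<And>x y. prob {\<omega>\<in>space M. U \<omega> \<le> x \<and> V \<omega> \<le> y} = mix_copula a (unif_cdf x) (unif_cdf y)"
  shows "AE \<omega> in M. U \<omega> = V \<omega> \<longleftrightarrow> (U \<omega> \<le> 1/2 \<longleftrightarrow> V \<omega> \<le> 1/2)"
proof -
  have VU: "prob {\<omega>\<in>space M. V \<omega> \<le> x \<and> U \<omega> \<le> y} = mix_copula a (unif_cdf x) (unif_cdf y)" for x y
    using UV[of y x] by (simp add: conj_commute mix_copula_commute)
  define between where "between W W' r = {\<omega>\<in>space M. W \<omega> \<le> of_rat r \<and> of_rat r < W' \<omega>
      \<and> (W \<omega> \<le> 1/2 \<longleftrightarrow> W' \<omega> \<le> 1/2)}" for W W' :: "'a \<Rightarrow> real" and r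
  have "between U V r \<in> null_sets M" "between V U r \<in> null_sets M" for r
    using mix_copula_no_mass_between[OF _ _ U UV, of "of_rat r"]
      mix_copula_no_mass_between[OF _ _ V VU, of "of_rat r"]
    by (auto simp: between_def emeasure_eq_measure null_sets_def)
  then have "(\<Union>r. between U V r \<union> between V U r) \<in> null_sets M"
    by auto
  moreover have "{\<omega>\<in>space M. \<not> (U \<omega> = V \<omega> \<longleftrightarrow> (U \<omega> \<le> 1/2 \<longleftrightarrow> V \<omega> \<le> 1/2))}
      \<subseteq> (\<Union>r. between U V r \<union> between V U r)"
  proof (intro subsetI)
    fix \<omega> assume "\<omega> \<in> {\<omega>\<in>space M. \<not> (U \<omega> = V \<omega> \<longleftrightarrow> (U \<omega> \<le> 1/2 \<longleftrightarrow> V \<omega> \<le> 1/2))}"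
    then have \<omega>: "\<omega> \<in> space M" "\<not> (U \<omega> = V \<omega> \<longleftrightarrow> (U \<omega> \<le> 1/2 \<longleftrightarrow> V \<omega> \<le> 1/2))"
      by auto
    then have "U \<omega> < V \<omega> \<or> V \<omega> < U \<omega>" and side: "U \<omega> \<le> 1/2 \<longleftrightarrow> V \<omega> \<le> 1/2"
      by auto
    then obtain r where "U \<omega> < of_rat r \<and> of_rat r < V \<omega> \<or> V \<omega> < of_rat r \<and> of_rat r < U \<omega>"
      using of_rat_dense by blast
    then show "\<omega> \<in> (\<Union>r. between U V r \<union> between V U r)"
      using \<omega>(1) side by (intro UN_I[of r]) (auto simp: between_def)
  qed
  ultimately show ?thesis by (rule AE_I')
qed

locale mix_copula_chain =
  fixes M :: "'a measure" and X :: "nat \<Rightarrow> 'a \<Rightarrow> real" and a :: real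
  assumes a: "0 < a" "a < 1"
    and markov: "markov_chain M X"
    and generated: "generated_by M X (mix_copula a) unif_cdf"
begin

sublocale prob_space M
  using markov by (simp add: markov_chain_def)

lemma measurable_X[measurable]: "X t \<in> borel_measurable M"
  using markov by (simp add: markov_chain_def)

lemma subalgebra_past: "subalgebra M (past_algebra M X t)"
  by (rule subalgebra_past_algebra) (rule measurable_X)

lemma space_in_past: "space M \<in> sets (past_algebra M X t)"
  by (metis sets.top space_past_algebra)

lemma cdf_X: "prob {\<omega>\<in>space M. X t \<omega> \<le> x} = unif_cdf x"
  using generated by (simp add: generated_by_def)

lemma joint_cdf_X:
  "prob {\<omega>\<in>space M. X t \<omega> \<le> x \<and> X (Suc t) \<omega> \<le> y} = mix_copula a (unif_cdf x) (unif_cdf y)"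
  using generated by (simp add: generated_by_def)

lemma AE_eq_next_iff_same_side:
  "AE \<omega> in M. X t \<omega> = X (Suc t) \<omega> \<longleftrightarrow> (X t \<omega> \<le> 1/2 \<longleftrightarrow> X (Suc t) \<omega> \<le> 1/2)"
  by (rule mix_copula_AE_eq_iff_same_side[OF measurable_X measurable_X cdf_X cdf_X joint_cdf_X])

definition prob_next_le_half :: "real \<Rightarrow> real" where
  "prob_next_le_half x = (if x \<le> 1/2 then a else 1 - a)"

lemma measurable_prob_next_le_half[measurable]: "prob_next_le_half \<in> borel_measurable borel"
  unfolding prob_next_le_half_def by measurable

lemma cond_prob_next_le_half:
  "AE \<omega> in M. real_cond_exp M (vimage_algebra (space M) (X t) borel)
      (indicator {\<omega>\<in>space M. X (Suc t) \<omega> \<in> {..1/2}}) \<omega> = prob_next_le_half (X t \<omega>)"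
proof (rule real_cond_exp_vimage_eq)
  let ?L = "{\<omega>\<in>space M. X (Suc t) \<omega> \<in> {..1/2}}"
  fix x
  let ?A = "X t -` {..x} \<inter> space M"
  have "(\<integral>\<omega>\<in>?A. indicator ?L \<omega> \<partial>M) = prob {\<omega>\<in>space M. X t \<omega> \<le> x \<and> X (Suc t) \<omega> \<le> 1/2}"
    by (subst set_integral_indicator) (auto intro: arg_cong[where f=prob])
  also have "\<dots> = mix_copula a (unif_cdf x) (unif_cdf (1/2))"
    by (rule joint_cdf_X)
  also have "\<dots> = (1 - a) * unif_cdf x + (2 * a - 1) * unif_cdf (min x (1/2))"
    by (auto simp: mix_copula_def unif_cdf_def min_def max_def algebra_simps)
  also have "\<dots> = (1 - a) * prob {\<omega>\<in>space M. X t \<omega> \<le> x}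
      + (2 * a - 1) * prob {\<omega>\<in>space M. X t \<omega> \<le> min x (1/2)}"
    by (simp only: cdf_X)
  also have "\<dots> = (\<integral>\<omega>\<in>?A. prob_next_le_half (X t \<omega>) \<partial>M)"
  proof -
    let ?S1 = "{\<omega>\<in>space M. X t \<omega> \<le> x}" and ?S2 = "{\<omega>\<in>space M. X t \<omega> \<le> min x (1/2)}"
    have S: "?S1 \<in> sets M" "?S2 \<in> sets M" by measurable
    have "(\<integral>\<omega>\<in>?A. prob_next_le_half (X t \<omega>) \<partial>M)
        = (\<integral>\<omega>. (1 - a) * indicator ?S1 \<omega> + (2 * a - 1) * indicator ?S2 \<omega> \<partial>M)"
      unfolding set_lebesgue_integral_def
      by (intro Bochner_Integration.integral_cong) (auto simp: prob_next_le_half_def indicator_def)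
    also have "\<dots> = (1 - a) * prob ?S1 + (2 * a - 1) * prob ?S2"
      using integrable_real_indicator[OF S(1)] integrable_real_indicator[OF S(2)]
      by (simp add: emeasure_eq_measure Int_absorb2 Collect_subset)
    finally show ?thesis by simp
  qed
  finally show "(\<integral>\<omega>\<in>?A. indicator ?L \<omega> \<partial>M) = (\<integral>\<omega>\<in>?A. prob_next_le_half (X t \<omega>) \<partial>M)" .
next
  show "integrable M (\<lambda>\<omega>. prob_next_le_half (X t \<omega>))"
    using a by (intro integrable_const_bound[where B=1]) (auto simp: prob_next_le_half_def)
qed (auto simp: prob_next_le_half_def a less_imp_le emeasure_eq_measure)

lemma past_sets: "B \<in> sets (past_algebra M X t) \<Longrightarrow> B \<in> sets M"
  using subalgebra_past by (auto simp: subalgebra_def)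

lemma prob_past_inter_next_le_half:
  assumes B: "B \<in> sets (past_algebra M X t)"
    and c: "\<And>\<omega>. \<omega> \<in> B \<Longrightarrow> prob_next_le_half (X t \<omega>) = c"
  shows "prob (B \<inter> {\<omega>\<in>space M. X (Suc t) \<omega> \<in> {..1/2}}) = c * prob B"
proof -
  have "prob (B \<inter> {\<omega>\<in>space M. X (Suc t) \<omega> \<in> {..1/2}}) = (\<integral>\<omega>\<in>B. prob_next_le_half (X t \<omega>) \<partial>M)"
    using markov_chain_prob_inter_past[OF markov _ _ cond_prob_next_le_half B] by simp
  also have "\<dots> = (\<integral>\<omega>\<in>B. c \<partial>M)"
    using c past_sets[OF B] by (intro set_lebesgue_integral_cong) auto
  also have "\<dots> = c * prob B"
    using past_sets[OF B] by (simp add: set_integral_const emeasure_eq_measure)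
  finally show ?thesis .
qed

lemma prob_past_inter_eq_next:
  assumes A: "A \<in> sets (past_algebra M X t)"
  shows "prob (A \<inter> {\<omega>\<in>space M. X t \<omega> = X (Suc t) \<omega>}) = a * prob A"
proof -
  let ?L = "{\<omega>\<in>space M. X (Suc t) \<omega> \<in> {..1/2}}"
  let ?H = "{\<omega>\<in>space M. X t \<omega> \<le> 1/2}"
  have "{\<omega>\<in>space (past_algebra M X t). X t \<omega> \<le> 1/2} \<in> sets (past_algebra M X t)"
    using measurable_past_algebra[where M=M and X=X and j=t and t=t] by measurable
  then have A1: "A \<inter> ?H \<in> sets (past_algebra M X t)" and A2: "A - ?H \<in> sets (past_algebra M X t)"
    using A by auto
  \<comment> \<open>On both A \<inter> ?H and A - ?H, the next state falls on the side of X t with probability a.\<close>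
  have "AE \<omega> in M. \<omega> \<in> A \<inter> {\<omega>\<in>space M. X t \<omega> = X (Suc t) \<omega>} \<longleftrightarrow> \<omega> \<in> (A \<inter> ?H \<inter> ?L) \<union> ((A - ?H) - ?L)"
    using AE_eq_next_iff_same_side[of t] AE_space
    by eventually_elim (use sets.sets_into_space[OF past_sets[OF A]] in auto)
  then have "prob (A \<inter> {\<omega>\<in>space M. X t \<omega> = X (Suc t) \<omega>}) = prob ((A \<inter> ?H \<inter> ?L) \<union> ((A - ?H) - ?L))"
    using past_sets[OF A] by (intro measure_eq_AE) auto
  also have "\<dots> = prob (A \<inter> ?H \<inter> ?L) + (prob (A - ?H) - prob ((A - ?H) \<inter> ?L))"
    using past_sets[OF A1] past_sets[OF A2]
    by (subst finite_measure_Union) (auto simp: finite_measure_Diff')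
  also have "\<dots> = a * prob (A \<inter> ?H) + a * prob (A - ?H)"
  proof -
    have "prob (A \<inter> ?H \<inter> ?L) = a * prob (A \<inter> ?H)"
      by (rule prob_past_inter_next_le_half[OF A1]) (auto simp: prob_next_le_half_def)
    moreover have "prob ((A - ?H) \<inter> ?L) = (1 - a) * prob (A - ?H)"
      using sets.sets_into_space[OF past_sets[OF A]] by (intro prob_past_inter_next_le_half[OF A2]) (auto simp: prob_next_le_half_def)
    ultimately show ?thesis by (simp add: algebra_simps)
  qed
  also have "\<dots> = a * prob A"
    using past_sets[OF A] by (simp add: finite_measure_Diff' algebra_simps)
  finally show ?thesis .
qed

lemma prob_eq_next: "prob {\<omega>\<in>space M. X t \<omega> = X (Suc t) \<omega>} = a"
  using prob_past_inter_eq_next[OF space_in_past] by (simp add: prob_space)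

lemma bernoulli_sequence_eq_next: "bernoulli_sequence M (\<lambda>t \<omega>. X t \<omega> = X (Suc t) \<omega>) a"
proof
  have "indep_events (\<lambda>t. {\<omega>\<in>space M. X t \<omega> = X (Suc t) \<omega>}) UNIV"
  proof (rule indep_eventsI_filtration)
    show "subalgebra M (past_algebra M X t)" for t
      by (rule subalgebra_past)
    show "{\<omega>\<in>space M. X s \<omega> = X (Suc s) \<omega>} \<in> sets (past_algebra M X t)" if "s < t" for s t
    proof -
      have [measurable]: "X s \<in> borel_measurable (past_algebra M X t)"
          "X (Suc s) \<in> borel_measurable (past_algebra M X t)"
        using that by (simp_all add: measurable_past_algebra)
      have "{\<omega>\<in>space (past_algebra M X t). X s \<omega> = X (Suc s) \<omega>} \<in> sets (past_algebra M X t)"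
        by measurable
      then show ?thesis by simp
    qed
  qed (simp_all add: prob_past_inter_eq_next prob_eq_next)
  then show "indep_vars (\<lambda>_. count_space UNIV) (\<lambda>t \<omega>. X t \<omega> = X (Suc t) \<omega>) UNIV"
    by (rule indep_varsI_indep_events)
  show "distr M (count_space UNIV) (\<lambda>\<omega>. X t \<omega> = X (Suc t) \<omega>) = measure_pmf (bernoulli_pmf a)" for t
    by (rule distr_pred_eq_bernoulli_pmf[OF _ prob_eq_next]) simp
qed (use a in auto)

end

section \<open>Maximum likelihood\<close>

lemma ln_less_minus_one: "0 < (x::real) \<Longrightarrow> x \<noteq> 1 \<Longrightarrow> ln x < x - 1"
  using ln_le_minus_one[of x] ln_eq_minus_one[of x] by fastforce

lemma binomial_likelihood_strict_max:
  fixes k m :: nat and b :: real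
  defines "p \<equiv> real k / real (k + m)"
  assumes km: "0 < k + m" and b: "0 \<le> b" "b \<le> 1" "b \<noteq> p"
  shows "b ^ k * (1 - b) ^ m < p ^ k * (1 - p) ^ m"
proof -
  have km_pos: "0 < real (k + m)" using km by linarith
  consider "k = 0" | "m = 0" | "0 < k" "0 < m" by blast
  then show ?thesis
  proof cases
    case 1
    then have "0 < b" "0 < m" using b km by (auto simp: p_def)
    then show ?thesis using 1 b by (simp add: p_def power_less_one_iff)
  next
    case 2
    then have "b < 1" "0 < k" using b km by (auto simp: p_def)
    then show ?thesis using 2 b by (simp add: p_def power_less_one_iff)
  next
    case 3
    have p: "0 < p" "p < 1" using 3 km_pos by (auto simp: p_def field_simps)
    have k_over_p: "real k / p = real (k + m)" and m_over_1_minus_p: "real m / (1 - p) = real (k + m)"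
      using 3 km_pos by (auto simp: p_def field_simps)
    show ?thesis
    proof (cases "b = 0 \<or> b = 1")
      case True
      then show ?thesis using 3 p by (auto simp: zero_power)
    next
      case False
      then have b01: "0 < b" "b < 1" using b by auto
      \<comment> \<open>Gibbs' inequality, from ln x \<le> x - 1.\<close>
      have "real k * ln (b / p) + real m * ln ((1 - b) / (1 - p))
          < real k * (b / p - 1) + real m * ((1 - b) / (1 - p) - 1)"
        using 3 b01 p ln_less_minus_one[of "b / p"] ln_le_minus_one[of "(1 - b) / (1 - p)"] b(3)
        by (intro add_less_le_mono mult_strict_left_mono mult_left_mono) auto
      also have "\<dots> = b * (real k / p) + (1 - b) * (real m / (1 - p)) - real (k + m)"
        by (simp add: algebra_simps)
      also have "\<dots> = 0"
        unfolding k_over_p m_over_1_minus_p by (simp add: algebra_simps)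
      finally have "ln (b ^ k * (1 - b) ^ m) < ln (p ^ k * (1 - p) ^ m)"
        using b01 p by (simp add: ln_div ln_mult ln_realpow algebra_simps)
      then show ?thesis using b01 p by simp
    qed
  qed
qed

lemma likelihood_eq_power:
  "likelihood X n \<omega> b
     = b ^ card {t. t < n \<and> X t \<omega> = X (Suc t) \<omega>} * (1 - b) ^ (n - card {t. t < n \<and> X t \<omega> = X (Suc t) \<omega>})"
proof -
  let ?S = "{t. t < n \<and> X t \<omega> = X (Suc t) \<omega>}"
  have "likelihood X n \<omega> b = (\<Prod>t\<in>?S. b) * (\<Prod>t\<in>{..<n} - ?S. 1 - b)"
    unfolding likelihood_def
    by (subst prod.subset_diff[of ?S "{..<n}"])
       (auto simp: mult.commute intro!: arg_cong2[where f="(*)"] prod.cong)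
  also have "\<dots> = b ^ card ?S * (1 - b) ^ (n - card ?S)"
    using card_Diff_subset[of ?S "{..<n}"] by force
  finally show ?thesis .
qed

lemma Yn_eq_card: "Yn X n \<omega> = real (card {t. t < n \<and> X t \<omega> = X (Suc t) \<omega>}) / real n"
proof -
  have "(\<Sum>t<n. eqind X t \<omega>) = real (card {t. t < n \<and> X t \<omega> = X (Suc t) \<omega>})"
    unfolding eqind_def by (simp add: sum.If_cases Int_def)
  then show ?thesis unfolding Yn_def by simp
qed

lemma Yn_unique_arg_max_likelihood:
  assumes "1 \<le> n"
  shows "is_arg_max (likelihood X n \<omega>) (\<lambda>b. b \<in> {0..1}) (Yn X n \<omega>)
      \<and> (\<forall>b\<in>{0..1}. likelihood X n \<omega> b = likelihood X n \<omega> (Yn X n \<omega>) \<longrightarrow> b = Yn X n \<omega>)"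
proof -
  define k where "k = card {t. t < n \<and> X t \<omega> = X (Suc t) \<omega>}"
  define m where "m = n - k"
  have "k \<le> n"
    unfolding k_def using card_mono[of "{..<n}" "{t. t < n \<and> X t \<omega> = X (Suc t) \<omega>}"] by auto
  then have n: "k + m = n" by (simp add: m_def)
  have L: "likelihood X n \<omega> b = b ^ k * (1 - b) ^ m" for b
    by (simp add: likelihood_eq_power k_def m_def)
  have Y: "Yn X n \<omega> = real k / real (k + m)"
    by (simp add: Yn_eq_card k_def[symmetric] n)
  have Y01: "Yn X n \<omega> \<in> {0..1}" using \<open>k \<le> n\<close> n by (auto simp: Y divide_le_eq_1)
  have "likelihood X n \<omega> b < likelihood X n \<omega> (Yn X n \<omega>)" if "b \<in> {0..1}" "b \<noteq> Yn X n \<omega>" for b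
    using binomial_likelihood_strict_max[of k m b] that assms n unfolding L Y by auto
  then show ?thesis using Y01 unfolding is_arg_max_def by (metis less_irrefl not_less_iff_gr_or_eq)
qed

theorem proposition2:
  fixes M :: "'a measure" and X :: "nat \<Rightarrow> 'a \<Rightarrow> real" and a :: real
  assumes a: "0 < a" "a < 1"
    and mc: "markov_chain M X"
    and st: "stationary M X"
    and gen: "generated_by M X (mix_copula a) unif_cdf"
  shows
    "(\<forall>n. prob_space.indep_vars M (\<lambda>_. count_space UNIV)
            (\<lambda>t \<omega>. X t \<omega> = X (Suc t) \<omega>) {..<n})
   \<and> (\<forall>t. distr M (count_space UNIV) (\<lambda>\<omega>. X t \<omega> = X (Suc t) \<omega>)
            = measure_pmf (bernoulli_pmf a))
   \<and> (\<forall>n\<ge>1. integral\<^sup>L M (Yn X n) = a)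
   \<and> (\<forall>\<epsilon>>0. (\<lambda>n. measure M {\<omega>\<in>space M. \<bar>Yn X n \<omega> - a\<bar> > \<epsilon>})
            \<longlonglongrightarrow> 0)
   \<and> weak_conv_m (\<lambda>n. distr M borel (\<lambda>\<omega>. sqrt (real n) * (Yn X n \<omega> - a)))
       (density lborel (normal_density 0 (sqrt (a * (1 - a)))))
   \<and> (\<forall>n\<ge>1. \<forall>\<omega>\<in>space M.
        is_arg_max (likelihood X n \<omega>) (\<lambda>b. b \<in> {0..1}) (Yn X n \<omega>)
      \<and> (\<forall>b\<in>{0..1}. likelihood X n \<omega> b = likelihood X n \<omega> (Yn X n \<omega>) \<longrightarrow> b = Yn X n \<omega>))"
proof -
  interpret mix_copula_chain M X a
    using a mc gen by unfold_locales
  interpret ties: bernoulli_sequence M "\<lambda>t \<omega>. X t \<omega> = X (Suc t) \<omega>" a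
    by (rule bernoulli_sequence_eq_next)
  have Yn: "Yn X n \<omega> = (\<Sum>t<n. of_bool (X t \<omega> = X (Suc t) \<omega>)) / real n" for n \<omega>
    by (simp add: Yn_def eqind_def of_bool_def del: sum_of_bool_eq)
  show ?thesis
    using indep_vars_subset[OF ties.indep] ties.distr_P ties.sample_mean_expectation[folded Yn]
      ties.sample_mean_tendsto_in_prob[folded Yn] ties.sample_mean_clt[folded Yn]
      Yn_unique_arg_max_likelihood[of _ X]
    by (intro conjI) blast+
qed

end
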